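(* Let $\mathbb{I}$ be a constraint graph (an $E$-graph) and $\mathbb{G}$ an $E$-group compatible with $\mathbb{I}$. If $\mathbb{G}$ is $N$-acyclic and free over $\mathbb{I}$, then $\mathbb{G}$ is $N$-acyclic over $\mathbb{I}$.
   Context: Let $E$ be a finite set. An $E$-group is a group $\mathbb{G}$ with $E\subseteq\mathbb{G}$ generating it, each $e\in E$ satisfying $e\neq1$, $e^2=1$; $[e_1\cdots e_n]_{\mathbb{G}}=e_1\cdots e_n$; $\mathbb{G}[\alpha]$ is the subgroup generated by $\alpha\subseteq E$. An $E$-graph is $(V,(R_e)_{e\in E})$ with each $R_e$ symmetric and each vertex having at most one $R_e$-neighbour; $\pi_e$ swaps $R_e$-neighbours and fixes other vertices, $\pi_{e_1\cdots e_n}=\pi_{e_n}\circ\cdots\circ\pi_{e_1}$. $\mathbb{G}$ is compatible with an $E$-graph if $[w]_{\mathbb{G}}=1$ implies $\pi_w=\mathrm{id}$. A coset cycle of length $n\ge2$ is $(g_i,\alpha_i)_{i\in\mathbb{Z}_n}$, $\alpha_i\subseteq E$, with $g_{i+1}\in g_i\mathbb{G}[\alpha_i]$ and $g_i\mathbb{G}[\alpha_i\cap\alpha_{i-1}]\cap g_{i+1}\mathbb{G}[\alpha_i\cap\alpha_{i+1}]=\emptyset$; $N$-acyclic means none of length $2,\dots,N$. Constraint graph $\mathbb{I}=(S,(R_e))$: for $\alpha\subseteq E$, $s,t\in S$, $\alpha^*[\mathbb{I},s]$ is the set of $w=e_1\cdots e_n\in\alpha^*$ labelling a walk in $\mathbb{I}$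 from $s$ (there are $s=s_0,\dots,s_n$ with $(s_{i-1},s_i)\in R_{e_i}$), $\alpha^*[\mathbb{I},s,t]$ those ending at $t$. $C[\mathbb{I},\alpha,s;g]:=\{g[w]_{\mathbb{G}}:w\in\alpha^*[\mathbb{I},s]\}$. An $\mathbb{I}$-coset cycle of length $n\ge2$ is $(g_i,\alpha_i,s_i)_{i\in\mathbb{Z}_n}$, $\alpha_i\subsetneq E$, $s_i\in S$, with $g_{i+1}=g_i[w]_{\mathbb{G}}$ for some $w\in\alpha_i^*[\mathbb{I},s_i,s_{i+1}]$ and $C[\mathbb{I},\alpha_i\cap\alpha_{i-1},s_i;g_i]\cap C[\mathbb{I},\alpha_i\cap\alpha_{i+1},s_{i+1};g_{i+1}]=\emptyset$; $\mathbb{G}$ is $N$-acyclic over $\mathbb{I}$ if there is none of length $2,\dots,N$. Freeness: for $g\in\mathbb{G}$, $\alpha\subseteq E$, $s\in S$, the map $h:C[\mathbb{I},\alpha,s;g]\to S$ sends $g[w]_{\mathbb{G}}$ ($w\in\alpha^*[\mathbb{I},s]$) to the endpoint of the walk from $s$ labelled $w$ (well defined by compatibility). $C[\mathbb{I},\alpha,s;g]$ is free if for all $g_1,g_2\in C[\mathbb{I},\alpha,s;g]$ and $\alpha_1,\alpha_2\subsetneq\alpha$: $g_1\mathbb{G}[\alpha_1]\cap g_2\mathbb{G}[\alpha_2]\neq\emptyset$ implies $C[\mathbb{I},\alpha_1,h(g_1);g_1]\cap C[\mathbb{I},\alpha_2,h(g_2);g_2]\neq\emptyset$. $\mathbb{G}$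 is free over $\mathbb{I}$ if all $C[\mathbb{I},\alpha,s;g]$ ($\alpha\subseteq E$, $s\in S$, $g\in\mathbb{G}$) are free. *)

theory Defs
  imports "HOL-Algebra.Coset" "HOL-Algebra.Generated_Groups"
begin

definition E_group :: "('g, 'b) monoid_scheme \<Rightarrow> 'g set \<Rightarrow> bool" where
  "E_group G E \<longleftrightarrow> group G \<and> finite E \<and> E \<subseteq> carrier G \<and> generate G E = carrier G \<and>
     (\<forall>e\<in>E. e \<noteq> \<one>\<^bsub>G\<^esub> \<and> e \<otimes>\<^bsub>G\<^esub> e = \<one>\<^bsub>G\<^esub>)"

definition word_eval :: "('g, 'b) monoid_scheme \<Rightarrow> 'g list \<Rightarrow> 'g" where
  "word_eval G w = foldr (\<lambda>e x. e \<otimes>\<^bsub>G\<^esub> x) w \<one>\<^bsub>G\<^esub>"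

definition E_graph :: "'g set \<Rightarrow> 'v set \<Rightarrow> ('g \<Rightarrow> ('v \<times> 'v) set) \<Rightarrow> bool" where
  "E_graph E V R \<longleftrightarrow> (\<forall>e\<in>E. R e \<subseteq> V \<times> V \<and> sym (R e) \<and>
      (\<forall>v u u'. (v, u) \<in> R e \<longrightarrow> (v, u') \<in> R e \<longrightarrow> u = u'))"

definition pi_edge :: "('g \<Rightarrow> ('v \<times> 'v) set) \<Rightarrow> 'g \<Rightarrow> 'v \<Rightarrow> 'v" where
  "pi_edge R e v = (if \<exists>u. (v, u) \<in> R e then (THE u. (v, u) \<in> R e) else v)"

definition pi_word :: "('g \<Rightarrow> ('v \<times> 'v) set) \<Rightarrow> 'g list \<Rightarrow> 'v \<Rightarrow> 'v" where
  "pi_word R w = foldl (\<lambda>f e. pi_edge R e \<circ> f) id w"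

definition compatible :: "('g, 'b) monoid_scheme \<Rightarrow> 'g set \<Rightarrow> ('g \<Rightarrow> ('v \<times> 'v) set) \<Rightarrow> bool" where
  "compatible G E R \<longleftrightarrow> (\<forall>w\<in>lists E. word_eval G w = \<one>\<^bsub>G\<^esub> \<longrightarrow> pi_word R w = id)"

definition coset_cycle ::
  "('g, 'b) monoid_scheme \<Rightarrow> 'g set \<Rightarrow> nat \<Rightarrow> (nat \<Rightarrow> 'g) \<Rightarrow> (nat \<Rightarrow> 'g set) \<Rightarrow> bool" where
  "coset_cycle G E n g \<alpha> \<longleftrightarrow> 2 \<le> n \<and>
     (\<forall>i<n. g i \<in> carrier G \<and> \<alpha> i \<subseteq> E \<and>
        g (Suc i mod n) \<in> g i <#\<^bsub>G\<^esub> generate G (\<alpha> i) \<and>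
        (g i <#\<^bsub>G\<^esub> generate G (\<alpha> i \<inter> \<alpha> ((i + n - 1) mod n))) \<inter>
        (g (Suc i mod n) <#\<^bsub>G\<^esub> generate G (\<alpha> i \<inter> \<alpha> (Suc i mod n))) = {})"

definition N_acyclic :: "('g, 'b) monoid_scheme \<Rightarrow> 'g set \<Rightarrow> nat \<Rightarrow> bool" where
  "N_acyclic G E N \<longleftrightarrow> \<not> (\<exists>n g \<alpha>. 2 \<le> n \<and> n \<le> N \<and> coset_cycle G E n g \<alpha>)"

inductive walk :: "('g \<Rightarrow> ('v \<times> 'v) set) \<Rightarrow> 'v \<Rightarrow> 'g list \<Rightarrow> 'v \<Rightarrow> bool"
  for R where
  walk_Nil: "walk R s [] s"
| walk_Cons: "(s, s') \<in> R e \<Longrightarrow> walk R s' w t \<Longrightarrow> walk R s (e # w) t"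

definition Cset :: "('g, 'b) monoid_scheme \<Rightarrow> ('g \<Rightarrow> ('v \<times> 'v) set) \<Rightarrow> 'g set \<Rightarrow> 'v \<Rightarrow> 'g \<Rightarrow> 'g set" where
  "Cset G R \<alpha> s g = {g \<otimes>\<^bsub>G\<^esub> word_eval G w | w. w \<in> lists \<alpha> \<and> (\<exists>t. walk R s w t)}"

definition I_coset_cycle ::
  "('g, 'b) monoid_scheme \<Rightarrow> 'g set \<Rightarrow> 'v set \<Rightarrow> ('g \<Rightarrow> ('v \<times> 'v) set) \<Rightarrow>
   nat \<Rightarrow> (nat \<Rightarrow> 'g) \<Rightarrow> (nat \<Rightarrow> 'g set) \<Rightarrow> (nat \<Rightarrow> 'v) \<Rightarrow> bool" where
  "I_coset_cycle G E S R n g \<alpha> s \<longleftrightarrow> 2 \<le> n \<and>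
     (\<forall>i<n. g i \<in> carrier G \<and> \<alpha> i \<subset> E \<and> s i \<in> S \<and>
        (\<exists>w. w \<in> lists (\<alpha> i) \<and> walk R (s i) w (s (Suc i mod n)) \<and>
             g (Suc i mod n) = g i \<otimes>\<^bsub>G\<^esub> word_eval G w) \<and>
        Cset G R (\<alpha> i \<inter> \<alpha> ((i + n - 1) mod n)) (s i) (g i) \<inter>
        Cset G R (\<alpha> i \<inter> \<alpha> (Suc i mod n)) (s (Suc i mod n)) (g (Suc i mod n)) = {})"

definition N_acyclic_over ::
  "('g, 'b) monoid_scheme \<Rightarrow> 'g set \<Rightarrow> 'v set \<Rightarrow> ('g \<Rightarrow> ('v \<times> 'v) set) \<Rightarrow> nat \<Rightarrow> bool" where
  "N_acyclic_over G E S R N \<longleftrightarrow>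
     \<not> (\<exists>n g \<alpha> s. 2 \<le> n \<and> n \<le> N \<and> I_coset_cycle G E S R n g \<alpha> s)"

text \<open>The map h : C[I,alpha,s;g] -> S, sending g[w] to the endpoint of the walk from s
labelled w (well defined by compatibility).\<close>
definition hmap :: "('g, 'b) monoid_scheme \<Rightarrow> ('g \<Rightarrow> ('v \<times> 'v) set) \<Rightarrow> 'g set \<Rightarrow> 'v \<Rightarrow> 'g \<Rightarrow> 'g \<Rightarrow> 'v" where
  "hmap G R \<alpha> s g x = (SOME t. \<exists>w. w \<in> lists \<alpha> \<and> walk R s w t \<and> x = g \<otimes>\<^bsub>G\<^esub> word_eval G w)"

definition free_C :: "('g, 'b) monoid_scheme \<Rightarrow> ('g \<Rightarrow> ('v \<times> 'v) set) \<Rightarrow> 'g set \<Rightarrow> 'v \<Rightarrow> 'g \<Rightarrow> bool" where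
  "free_C G R \<alpha> s g \<longleftrightarrow>
     (\<forall>g1\<in>Cset G R \<alpha> s g. \<forall>g2\<in>Cset G R \<alpha> s g. \<forall>\<alpha>1 \<alpha>2. \<alpha>1 \<subset> \<alpha> \<longrightarrow> \<alpha>2 \<subset> \<alpha> \<longrightarrow>
        (g1 <#\<^bsub>G\<^esub> generate G \<alpha>1) \<inter> (g2 <#\<^bsub>G\<^esub> generate G \<alpha>2) \<noteq> {} \<longrightarrow>
        Cset G R \<alpha>1 (hmap G R \<alpha> s g g1) g1 \<inter> Cset G R \<alpha>2 (hmap G R \<alpha> s g g2) g2 \<noteq> {})"

definition free_over :: "('g, 'b) monoid_scheme \<Rightarrow> 'g set \<Rightarrow> 'v set \<Rightarrow> ('g \<Rightarrow> ('v \<times> 'v) set) \<Rightarrow> bool" where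
  "free_over G E S R \<longleftrightarrow> (\<forall>\<alpha>. \<alpha> \<subseteq> E \<longrightarrow> (\<forall>s\<in>S. \<forall>g\<in>carrier G. free_C G R \<alpha> s g))"

end

theory Submission
  imports Defs
begin

text \<open>Each step of an I-coset cycle is given by a walk w from s_i to s_(i+1) inside the
constraint graph, so g_(i+1) = g_i [w] lies in C[I, alpha_i, s_i; g_i], and by compatibility the
endpoint map h of that set sends g_i to s_i and g_(i+1) to s_(i+1). The disjointness of the
C-sets forces both intersections alpha_i \<inter> alpha_(i+/-1) to be proper subsets of alpha_i, and
then freeness of C[I, alpha_i, s_i; g_i] turns any common element of the two cosets into a common
element of the two C-sets. Hence every I-coset cycle is an ordinary coset cycle of the same
length, which N-acyclicity of G excludes.\<close>

lemma foldl_comp_shift: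
  fixes h :: "'a \<Rightarrow> 'a"
  shows "foldl (\<lambda>f e. F e \<circ> f) h w = foldl (\<lambda>f e. F e \<circ> f) id w \<circ> h"
proof (induction w arbitrary: h)
  case (Cons a w)
  show ?case
    by (simp only: foldl_Cons Cons.IH[of "F a \<circ> h"] Cons.IH[of "F a"] comp_assoc comp_id)
qed simp

lemma pi_word_Nil: "pi_word R [] = id"
  by (simp add: pi_word_def)

lemma pi_word_Cons: "pi_word R (e # w) = pi_word R w \<circ> pi_edge R e"
  unfolding pi_word_def by (simp add: foldl_comp_shift[of _ "pi_edge R e"])

lemma walk_append:
  "walk R s w t \<Longrightarrow> walk R t w' u \<Longrightarrow> walk R s (w @ w') u"
  by (induction rule: walk.induct) (auto intro: walk.walk_Cons)

lemma walk_rev: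
  assumes "walk R s w t" "E_graph E V R" "set w \<subseteq> E"
  shows "walk R t (rev w) s"
  using assms
proof (induction rule: walk.induct)
  case (walk_Cons s s' e w t)
  have "(s', s) \<in> R e"
    using walk_Cons.hyps(1) walk_Cons.prems unfolding E_graph_def sym_def by auto
  then have "walk R s' [e] s" by (rule walk.walk_Cons[OF _ walk.walk_Nil])
  with walk_Cons show ?case by (auto intro: walk_append)
qed (simp add: walk.walk_Nil)

lemma pi_word_walk:
  assumes "walk R s w t" "E_graph E V R" "set w \<subseteq> E"
  shows "pi_word R w s = t"
  using assms
proof (induction rule: walk.induct)
  case (walk_Cons s s' e w t)
  have "\<forall>u u'. (s, u) \<in> R e \<longrightarrow> (s, u') \<in> R e \<longrightarrow> u = u'"
    using walk_Cons.prems unfolding E_graph_def by auto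
  then have "pi_edge R e s = s'"
    using walk_Cons.hyps(1) unfolding pi_edge_def by (auto intro: the_equality)
  with walk_Cons show ?case by (simp add: pi_word_Cons)
qed (simp add: pi_word_Nil)

context group
begin

lemma word_eval_closed: "set w \<subseteq> carrier G \<Longrightarrow> word_eval G w \<in> carrier G"
  by (induction w) (auto simp: word_eval_def)

lemma word_eval_append:
  "set xs \<subseteq> carrier G \<Longrightarrow> set ys \<subseteq> carrier G \<Longrightarrow>
   word_eval G (xs @ ys) = word_eval G xs \<otimes> word_eval G ys"
  by (induction xs)
     (auto simp: word_eval_def m_assoc word_eval_closed[unfolded word_eval_def])

lemma word_eval_rev:
  assumes "\<forall>a\<in>set w. a \<in> carrier G \<and> a \<otimes> a = \<one>"
  shows "word_eval G (rev w) = inv (word_eval G w)"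
  using assms
proof (induction w)
  case (Cons a w)
  then have a: "a \<in> carrier G" "inv a = a" and w: "set w \<subseteq> carrier G"
    by (auto simp: inv_equality)
  have "word_eval G (rev (a # w)) = inv (word_eval G w) \<otimes> a"
    using Cons a w by (simp add: word_eval_append) (simp add: word_eval_def)
  also have "\<dots> = inv (a \<otimes> word_eval G w)"
    using a w by (simp add: inv_mult_group word_eval_closed)
  finally show ?case by (simp add: word_eval_def)
qed (simp add: word_eval_def)

lemma word_eval_in_generate:
  "set w \<subseteq> A \<Longrightarrow> A \<subseteq> carrier G \<Longrightarrow> word_eval G w \<in> generate G A"
  by (induction w) (auto simp: word_eval_def intro: generate.intros)

end

lemma E_group_word_eval_rev:
  assumes "E_group G E" "set w \<subseteq> E"
  shows "word_eval G (rev w) = inv\<^bsub>G\<^esub> (word_eval G w)"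
  using assms by (intro group.word_eval_rev) (auto simp: E_group_def)

lemma walk_endpoint_unique:
  assumes grp: "E_group G E" and gr: "E_graph E V R" and comp: "compatible G E R"
    and w: "walk R s w t" "set w \<subseteq> E" and w': "walk R s w' t'" "set w' \<subseteq> E"
    and eq: "word_eval G w = word_eval G w'"
  shows "t = t'"
proof -
  interpret group G using grp unfolding E_group_def by auto
  have EC: "E \<subseteq> carrier G" using grp unfolding E_group_def by auto
  have loop: "walk R t' (rev w' @ w) t"
    using walk_append[OF walk_rev[OF w'(1) gr w'(2)] w(1)] .
  have "word_eval G (rev w' @ w) = inv\<^bsub>G\<^esub> (word_eval G w') \<otimes>\<^bsub>G\<^esub> word_eval G w"
    using w w' EC E_group_word_eval_rev[OF grp w'(2)] by (simp add: word_eval_append subset_iff)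
  also have "\<dots> = \<one>\<^bsub>G\<^esub>"
    using eq w'(2) EC by (simp add: word_eval_closed subset_iff)
  finally have "pi_word R (rev w' @ w) = id"
    using comp w w' unfolding compatible_def by (auto simp: lists_eq_set)
  with pi_word_walk[OF loop gr] w w' show ?thesis by auto
qed

lemma hmap_walk:
  assumes grp: "E_group G E" and gr: "E_graph E V R" and comp: "compatible G E R"
    and "\<alpha> \<subseteq> E" "g \<in> carrier G" "w \<in> lists \<alpha>" "walk R s w t"
  shows "hmap G R \<alpha> s g (g \<otimes>\<^bsub>G\<^esub> word_eval G w) = t"
proof -
  interpret group G using grp unfolding E_group_def by auto
  have EC: "E \<subseteq> carrier G" using grp unfolding E_group_def by auto
  let ?P = "\<lambda>t. \<exists>w'. w' \<in> lists \<alpha> \<and> walk R s w' t \<and>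
    g \<otimes>\<^bsub>G\<^esub> word_eval G w = g \<otimes>\<^bsub>G\<^esub> word_eval G w'"
  have "?P t" using assms by auto
  then have "?P (SOME t. ?P t)" by (rule someI)
  then obtain w' where w': "w' \<in> lists \<alpha>" "walk R s w' (SOME t. ?P t)"
    and eq: "g \<otimes>\<^bsub>G\<^esub> word_eval G w = g \<otimes>\<^bsub>G\<^esub> word_eval G w'"
    by blast
  have "word_eval G w \<in> carrier G" "word_eval G w' \<in> carrier G"
    using assms(4,6) w'(1) EC by (auto intro!: word_eval_closed)
  with eq \<open>g \<in> carrier G\<close> have "word_eval G w = word_eval G w'"
    by (metis Units_eq Units_l_cancel)
  then have "t = (SOME t. ?P t)"
    using walk_endpoint_unique[OF grp gr comp \<open>walk R s w t\<close> _ w'(2)] assms w'(1) by auto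
  then show ?thesis unfolding hmap_def by simp
qed

lemma Cset_walk:
  "w \<in> lists \<alpha> \<Longrightarrow> walk R s w t \<Longrightarrow> g \<otimes>\<^bsub>G\<^esub> word_eval G w \<in> Cset G R \<alpha> s g"
  unfolding Cset_def by auto

lemma Cset_base:
  assumes "group G" "g \<in> carrier G"
  shows "g \<in> Cset G R \<alpha> s g"
  using Cset_walk[of "[]" \<alpha> R s s G g] assms
  by (simp add: word_eval_def walk.walk_Nil group.is_monoid)

lemma l_coset_disjoint_if_Cset_disjoint:
  assumes grp: "E_group G E" and gr: "E_graph E V R" and comp: "compatible G E R"
    and \<alpha>: "\<alpha> \<subseteq> E" and g: "g \<in> carrier G" and free: "free_C G R \<alpha> s g"
    and w: "w \<in> lists \<alpha>" "walk R s w t" and g'_def: "g' = g \<otimes>\<^bsub>G\<^esub> word_eval G w"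
    and \<beta>: "\<beta>1 \<subseteq> \<alpha>" "\<beta>2 \<subseteq> \<alpha>"
    and disj: "Cset G R \<beta>1 s g \<inter> Cset G R \<beta>2 t g' = {}"
  shows "(g <#\<^bsub>G\<^esub> generate G \<beta>1) \<inter> (g' <#\<^bsub>G\<^esub> generate G \<beta>2) = {}"
proof -
  interpret group G using grp unfolding E_group_def by auto
  have EC: "E \<subseteq> carrier G" using grp unfolding E_group_def by auto
  have wE: "set w \<subseteq> E" using w(1) \<alpha> by auto
  have g': "g' \<in> carrier G" using g wE EC by (auto simp: g'_def intro: word_eval_closed)
  have g'_in: "g' \<in> Cset G R \<alpha> s g" using Cset_walk[OF w] by (simp add: g'_def)
  have "\<beta>1 \<noteq> \<alpha>"
    using disj g'_in Cset_base[OF is_group g', of R \<beta>2 t] by blast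
  moreover
  have "g' \<otimes>\<^bsub>G\<^esub> word_eval G (rev w) = g"
    using g wE EC by (simp add: g'_def E_group_word_eval_rev[OF grp wE] m_assoc
        word_eval_closed subset_iff)
  then have "g \<in> Cset G R \<alpha> t g'"
    using Cset_walk[of "rev w" \<alpha> R t s G g'] w walk_rev[OF w(2) gr wE] by (simp add: lists_eq_set)
  then have "\<beta>2 \<noteq> \<alpha>"
    using disj Cset_base[OF is_group g, of R \<beta>1 s] by blast
  moreover have "hmap G R \<alpha> s g g = s"
    using hmap_walk[OF grp gr comp \<alpha> g _ walk_Nil] g by (simp add: word_eval_def)
  moreover have "hmap G R \<alpha> s g g' = t"
    using hmap_walk[OF grp gr comp \<alpha> g w] by (simp add: g'_def)
  ultimately show ?thesis
    using free[unfolded free_C_def, rule_format, OF Cset_base[OF is_group g] g'_in] \<beta> disj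
    by auto
qed

lemma I_coset_cycle_imp_coset_cycle:
  assumes grp: "E_group G E" and gr: "E_graph E S R" and comp: "compatible G E R"
    and free: "free_over G E S R" and cyc: "I_coset_cycle G E S R n g \<alpha> s"
  shows "coset_cycle G E n g \<alpha>"
  unfolding coset_cycle_def
proof (intro conjI allI impI)
  show "2 \<le> n" using cyc unfolding I_coset_cycle_def by simp
  fix i assume "i < n"
  then have gi: "g i \<in> carrier G" and \<alpha>i: "\<alpha> i \<subset> E" and si: "s i \<in> S"
    and disj: "Cset G R (\<alpha> i \<inter> \<alpha> ((i + n - 1) mod n)) (s i) (g i) \<inter>
      Cset G R (\<alpha> i \<inter> \<alpha> (Suc i mod n)) (s (Suc i mod n)) (g (Suc i mod n)) = {}"
    using cyc unfolding I_coset_cycle_def by auto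
  obtain w where w: "w \<in> lists (\<alpha> i)" "walk R (s i) w (s (Suc i mod n))"
      and next_g: "g (Suc i mod n) = g i \<otimes>\<^bsub>G\<^esub> word_eval G w"
    using cyc \<open>i < n\<close> unfolding I_coset_cycle_def by blast
  show "g i \<in> carrier G" "\<alpha> i \<subseteq> E" using gi \<alpha>i by auto
  have "E \<subseteq> carrier G" "group G" using grp unfolding E_group_def by auto
  then have "word_eval G w \<in> generate G (\<alpha> i)"
    using w(1) \<alpha>i by (intro group.word_eval_in_generate) auto
  then show "g (Suc i mod n) \<in> g i <#\<^bsub>G\<^esub> generate G (\<alpha> i)"
    using next_g by (auto simp: l_coset_def)
  have "free_C G R (\<alpha> i) (s i) (g i)"
    using free \<alpha>i si gi unfolding free_over_def by auto
  with \<alpha>i gi w next_g disj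
  show "(g i <#\<^bsub>G\<^esub> generate G (\<alpha> i \<inter> \<alpha> ((i + n - 1) mod n))) \<inter>
      (g (Suc i mod n) <#\<^bsub>G\<^esub> generate G (\<alpha> i \<inter> \<alpha> (Suc i mod n))) = {}"
    by (intro l_coset_disjoint_if_Cset_disjoint[OF grp gr comp]) auto
qed

theorem mainTheorem9:
  fixes G :: "('g, 'b) monoid_scheme" and E :: "'g set"
    and S :: "'v set" and R :: "'g \<Rightarrow> ('v \<times> 'v) set" and N :: nat
  assumes "E_group G E"
    and "E_graph E S R"
    and "compatible G E R"
    and "N_acyclic G E N"
    and "free_over G E S R"
  shows "N_acyclic_over G E S R N"
proof -
  have "coset_cycle G E n g \<alpha>" if "I_coset_cycle G E S R n g \<alpha> s" for n g \<alpha> s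
    using I_coset_cycle_imp_coset_cycle assms(1-3,5) that .
  with assms(4) show ?thesis
    unfolding N_acyclic_def N_acyclic_over_def by blast
qed

end
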